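(* Let $S$ be a numerical semigroup with minimal generators $a_1<a_2<\cdots<a_\nu$ ($\nu\ge 2$), multiplicity $\mu=a_1$ and conductor $c$, with $a_2>\frac{c+\mu}{3}$. Let $P=\{a_1,\dots,a_\nu\}$, $P_1=\{a\in P\setminus\{\mu\}: \tfrac13(c+\mu)<a<\tfrac12(c+\mu)\}$, $P_2=\{a\in P\setminus\{\mu\}: \tfrac12(c+\mu)\le a<\tfrac23(c+\mu)\}$, $q_i=|P_i|$, and let $\sigma$ be the maximal cardinality of an independent set of Apéry pairs. Then $$\frac{q_1(q_1+1)}{2}+\sigma\cdot\max\{q_1,q_2\}+\nu\ge\mu.$$
   Context: A numerical semigroup is a submonoid $S\subseteq\mathbb{N}$ with finite complement; $\nu$ is the number of minimal generators, $\mu$ the smallest one, $c$ the least integer with $c+\mathbb{N}\subseteq S$. $\mathrm{Ap}(S)=\{x\in S: x-\mu\notin S\}$. An Apéry pair is a pair $(a,b)\in P_1\times P_2$ with $a+b\in\mathrm{Ap}(S)$. A set $\{(a_i,b_i)\}_{i=1}^n$ of Apéry pairs is independent if $a_i\ne a_j$ and $b_i\ne b_j$ for all $i\ne j$. *)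

theory Defs
  imports Complex_Main
begin

definition numerical_semigroup :: "nat set \<Rightarrow> bool" where
  "numerical_semigroup S \<longleftrightarrow> 0 \<in> S \<and> (\<forall>x\<in>S. \<forall>y\<in>S. x + y \<in> S) \<and> finite (UNIV - S)"

definition min_gens :: "nat set \<Rightarrow> nat set" where
  "min_gens S = {a \<in> S. a \<noteq> 0 \<and> \<not> (\<exists>x\<in>S. \<exists>y\<in>S. x \<noteq> 0 \<and> y \<noteq> 0 \<and> a = x + y)}"

definition embdim :: "nat set \<Rightarrow> nat" where
  "embdim S = card (min_gens S)"

definition multiplicity_ns :: "nat set \<Rightarrow> nat" where
  "multiplicity_ns S = (LEAST x. x \<in> S \<and> x \<noteq> 0)"

definition conductor :: "nat set \<Rightarrow> nat" where
  "conductor S = (LEAST c. \<forall>n. c + n \<in> S)"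

definition apery :: "nat set \<Rightarrow> nat set" where
  "apery S = {x \<in> S. \<not> (multiplicity_ns S \<le> x \<and> x - multiplicity_ns S \<in> S)}"

definition P1 :: "nat set \<Rightarrow> nat set" where
  "P1 S = {a \<in> min_gens S - {multiplicity_ns S}.
      (real (conductor S) + real (multiplicity_ns S)) / 3 < real a \<and>
      real a < (real (conductor S) + real (multiplicity_ns S)) / 2}"

definition P2 :: "nat set \<Rightarrow> nat set" where
  "P2 S = {a \<in> min_gens S - {multiplicity_ns S}.
      (real (conductor S) + real (multiplicity_ns S)) / 2 \<le> real a \<and>
      real a < 2 * (real (conductor S) + real (multiplicity_ns S)) / 3}"

definition apery_pairs :: "nat set \<Rightarrow> (nat \<times> nat) set" where
  "apery_pairs S = {(a, b). a \<in> P1 S \<and> b \<in> P2 S \<and> a + b \<in> apery S}"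

definition independent_pairs :: "nat set \<Rightarrow> (nat \<times> nat) set \<Rightarrow> bool" where
  "independent_pairs S A \<longleftrightarrow> A \<subseteq> apery_pairs S \<and> inj_on fst A \<and> inj_on snd A"

definition sigma_ap :: "nat set \<Rightarrow> nat" where
  "sigma_ap S = Max {card A | A. independent_pairs S A}"

end

(*
  Every element of the Apery set Ap(S) lies below c + \<mu>, and Ap(S) meets every residue
  class modulo \<mu>, so \<mu> \<le> |Ap(S)|. A nonzero Apery element that is not a minimal generator
  is a sum of two nonzero Apery elements. Since every minimal generator other than \<mu> exceeds
  (c + \<mu>)/3, such an element is a sum x + y of exactly two generators x \<le> y, where x lies in
  P1 and y in P1 or P2. Hence \<mu> \<le> \<nu> + |P1 + P1| + |Apery pairs|. The sumset P1 + P1 has at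
  most q1(q1 + 1)/2 elements, and the Apery pairs are the edges of a bipartite graph between
  P1 and P2; by Koenig's theorem (here derived from the defect form of Hall's theorem) they
  are covered by \<sigma> vertices, each of degree at most max q1 q2.
*)
theory Submission
  imports Defs "HOL-Library.Set_Algebras"
begin

section \<open>Matchings in finite bipartite graphs\<close>

definition matching :: "('a \<times> 'b) set \<Rightarrow> bool" where
  "matching M \<longleftrightarrow> inj_on fst M \<and> inj_on snd M"

definition deficiency_le :: "('a \<times> 'b) set \<Rightarrow> 'a set \<Rightarrow> int \<Rightarrow> bool" where
  "deficiency_le E A d \<longleftrightarrow> (\<forall>X\<subseteq>A. int (card X) - int (card (E `` X)) \<le> d)"

lemma matching_singleton: "matching {p}"
  by (simp add: matching_def)

lemma matching_Un_separated:
  assumes "matching M1" "matching M2" "M1 \<subseteq> X \<times> Y" "M2 \<subseteq> (- X) \<times> (- Y)"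
    and "finite M1" "finite M2"
  shows "matching (M1 \<union> M2)" "card (M1 \<union> M2) = card M1 + card M2"
proof -
  have "fst ` M1 \<inter> fst ` M2 = {}" "snd ` M1 \<inter> snd ` M2 = {}"
    using assms(3,4) by auto
  then show "matching (M1 \<union> M2)"
    using assms(1,2) by (auto simp: matching_def inj_on_Un)
  have "M1 \<inter> M2 = {}" using assms(3,4) by auto
  then show "card (M1 \<union> M2) = card M1 + card M2"
    using assms(5,6) by (rule card_Un_disjoint[rotated 2])
qed

lemma deficiency_le_nonneg: "deficiency_le E A d \<Longrightarrow> 0 \<le> d"
  unfolding deficiency_le_def by (drule spec[of _ "{}"]) simp

lemma deficiency_le_restrict:
  "deficiency_le E A d \<Longrightarrow> X \<subseteq> A \<Longrightarrow> deficiency_le (E \<inter> X \<times> UNIV) X d"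
proof -
  assume "deficiency_le E A d" "X \<subseteq> A"
  moreover have "(E \<inter> X \<times> UNIV) `` Y = E `` Y" if "Y \<subseteq> X" for Y
    using that by auto
  ultimately show ?thesis by (auto simp: deficiency_le_def)
qed

lemma deficiency_le_contract:
  assumes "deficiency_le E A d" "X \<subseteq> A" "finite A" "finite E"
    and critical: "int (card X) - int (card (E `` X)) \<ge> d"
  shows "deficiency_le (E \<inter> (A - X) \<times> (- (E `` X))) (A - X) 0"
  unfolding deficiency_le_def
proof (intro allI impI)
  fix Y assume Y: "Y \<subseteq> A - X"
  have YX: "Y \<union> X \<subseteq> A" "Y \<inter> X = {}" using Y assms(2) by auto
  have fin: "finite X" "finite Y" "finite (E `` Y - E `` X)" "finite (E `` X)"
    using YX assms(3,4) by (auto simp: finite_Image dest: finite_subset)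
  have "E `` (Y \<union> X) = (E `` Y - E `` X) \<union> E `` X" by auto
  then have "card (E `` (Y \<union> X)) = card (E `` Y - E `` X) + card (E `` X)"
    using fin by (simp only:) (rule card_Un_disjoint, auto)
  moreover have "card (Y \<union> X) = card Y + card X"
    by (rule card_Un_disjoint[OF fin(2,1) YX(2)])
  moreover have "int (card (Y \<union> X)) - int (card (E `` (Y \<union> X))) \<le> d"
    using assms(1) YX(1) unfolding deficiency_le_def by blast
  moreover have "(E \<inter> (A - X) \<times> (- (E `` X))) `` Y = E `` Y - E `` X"
    using Y by auto
  ultimately show "int (card Y) - int (card ((E \<inter> (A - X) \<times> (- (E `` X))) `` Y)) \<le> 0"
    using critical by (simp only:)
qed

lemma deficiency_le_delete_isolated:
  assumes "deficiency_le E A d" "a \<in> A" "E `` {a} = {}"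
    and noncritical: "\<And>X. X \<subseteq> A \<Longrightarrow> X \<noteq> {} \<Longrightarrow> X \<noteq> A \<Longrightarrow> int (card X) - int (card (E `` X)) < d"
  shows "deficiency_le E (A - {a}) (d - 1)"
  unfolding deficiency_le_def
proof (intro allI impI)
  fix Y assume Y: "Y \<subseteq> A - {a}"
  have "int (card {a}) - int (card (E `` {a})) \<le> d"
    using assms(1,2) unfolding deficiency_le_def by blast
  then have "1 \<le> d" using assms(3) by simp
  then show "int (card Y) - int (card (E `` Y)) \<le> d - 1"
    using noncritical[of Y] Y assms(2) by (cases "Y = {}") force+
qed

lemma deficiency_le_delete_edge:
  assumes "deficiency_le E A d" "(a, b) \<in> E" "a \<in> A" "finite E"
    and noncritical: "\<And>X. X \<subseteq> A \<Longrightarrow> X \<noteq> {} \<Longrightarrow> X \<noteq> A \<Longrightarrow> int (card X) - int (card (E `` X)) < d"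
  shows "deficiency_le (E \<inter> (A - {a}) \<times> (- {b})) (A - {a}) d"
  unfolding deficiency_le_def
proof (intro allI impI)
  fix Y assume Y: "Y \<subseteq> A - {a}"
  have "(E \<inter> (A - {a}) \<times> (- {b})) `` Y = E `` Y - {b}" using Y by auto
  moreover have "int (card (E `` Y)) \<le> int (card (E `` Y - {b})) + 1"
    using assms(4) by (cases "b \<in> E `` Y") (auto simp: finite_Image)
  ultimately show "int (card Y) - int (card ((E \<inter> (A - {a}) \<times> (- {b})) `` Y)) \<le> d"
    using noncritical[of Y] Y assms(3) deficiency_le_nonneg[OF assms(1)]
    by (cases "Y = {}") force+
qed

lemma defect_Hall:
  fixes d :: int
  assumes "finite A" "finite E" "Domain E \<subseteq> A" "deficiency_le E A d"
  shows "\<exists>M\<subseteq>E. matching M \<and> int (card A) - d \<le> int (card M)"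
  using assms
proof (induction "card A" arbitrary: A E d rule: less_induct)
  case less
  consider "A = {}"
    | (critical) X where "X \<subseteq> A" "X \<noteq> {}" "X \<noteq> A" "int (card X) - int (card (E `` X)) \<ge> d"
    | (noncritical) a where "a \<in> A"
        "\<And>X. X \<subseteq> A \<Longrightarrow> X \<noteq> {} \<Longrightarrow> X \<noteq> A \<Longrightarrow> int (card X) - int (card (E `` X)) < d"
    by (meson ex_in_conv not_le)
  then show ?case
  proof cases
    case 1
    then show ?thesis
      using deficiency_le_nonneg[OF less.prems(4)] by (intro exI[of _ "{}"]) (auto simp: matching_def)
  next
    case critical
    have card_lt: "card X < card A" "card (A - X) < card A"
      using critical(1-3) less.prems(1) by (auto intro: psubset_card_mono)
    obtain M1 where M1: "M1 \<subseteq> E \<inter> X \<times> UNIV" "matching M1" "int (card X) - d \<le> int (card M1)"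
      using less.hyps[OF card_lt(1), of "E \<inter> X \<times> UNIV" d] deficiency_le_restrict[OF less.prems(4) critical(1)]
        less.prems(1,2) critical(1) by (auto intro: finite_subset)
    obtain M2 where M2: "M2 \<subseteq> E \<inter> (A - X) \<times> (- (E `` X))" "matching M2" "int (card (A - X)) \<le> int (card M2)"
      using less.hyps[OF card_lt(2), of "E \<inter> (A - X) \<times> (- (E `` X))" 0]
        deficiency_le_contract[OF less.prems(4) critical(1) less.prems(1,2) critical(4)]
        less.prems(1,2) by auto
    have "M1 \<subseteq> X \<times> E `` X" "M2 \<subseteq> (- X) \<times> (- (E `` X))" "finite M1" "finite M2"
      using M1(1) M2(1) less.prems(2) by (auto intro: finite_subset)
    note M12 = matching_Un_separated[OF M1(2) M2(2) this]
    have "card A = card X + card (A - X)"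
      using critical(1) less.prems(1) by (metis card_Diff_subset card_mono finite_subset le_add_diff_inverse)
    then show ?thesis
      using M1 M2 M12 by (intro exI[of _ "M1 \<union> M2"]) auto
  next
    case noncritical
    have card_A: "card (A - {a}) < card A" "int (card (A - {a})) = int (card A) - 1"
      using noncritical(1) less.prems(1) card_Diff1_less[of A a] by (auto simp: of_nat_diff)
    show ?thesis
    proof (cases "E `` {a} = {}")
      case True
      then obtain M where "M \<subseteq> E" "matching M" "int (card (A - {a})) - (d - 1) \<le> int (card M)"
        using less.hyps[OF card_A(1), of E "d - 1"] less.prems
          deficiency_le_delete_isolated[OF less.prems(4) noncritical(1) True noncritical(2)] by blast
      then show ?thesis using card_A by auto
    next
      case False
      then obtain b where ab: "(a, b) \<in> E" by blast
      obtain M where M: "M \<subseteq> E \<inter> (A - {a}) \<times> (- {b})" "matching M" "int (card (A - {a})) - d \<le> int (card M)"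
        using less.hyps[OF card_A(1), of "E \<inter> (A - {a}) \<times> (- {b})" d] less.prems
          deficiency_le_delete_edge[OF less.prems(4) ab noncritical(1) less.prems(2) noncritical(2)] by auto
      have "{(a, b)} \<subseteq> {a} \<times> {b}" "M \<subseteq> (- {a}) \<times> (- {b})" "finite {(a, b)}" "finite M"
        using M(1) less.prems(2) by (auto intro: finite_subset)
      note M_ab = matching_Un_separated[OF matching_singleton M(2) this]
      show ?thesis
        using M M_ab ab card_A by (intro exI[of _ "{(a, b)} \<union> M"]) auto
    qed
  qed
qed

lemma card_le_matching_mult_max:
  assumes "finite A" "finite B" "E \<subseteq> A \<times> B"
  shows "\<exists>M\<subseteq>E. matching M \<and> card E \<le> card M * max (card A) (card B)"
proof -
  define deficiency where "deficiency X = int (card X) - int (card (E `` X))" for X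
  have "Max (deficiency ` Pow A) \<in> deficiency ` Pow A"
    using assms(1) by (intro Max_in) auto
  then obtain X where X: "X \<subseteq> A" "deficiency X = Max (deficiency ` Pow A)"
    by auto
  have deficient: "deficiency_le E A (deficiency X)"
    unfolding deficiency_le_def deficiency_def[symmetric]
    using assms(1) X(2) by (auto intro: Max_ge)
  have "finite E"
    using finite_subset[OF assms(3)] assms(1,2) by blast
  moreover have "Domain E \<subseteq> A"
    using assms(3) by blast
  ultimately obtain M where M: "M \<subseteq> E" "matching M" "int (card A) - deficiency X \<le> int (card M)"
    using defect_Hall[OF assms(1) _ _ deficient] by blast
  have "finite (E `` X)" using \<open>finite E\<close> by (simp add: finite_Image)
  \<comment> \<open>Koenig: the vertex cover \<open>(A - X) \<union> E `` X\<close> is no larger than the matching\<close>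
  have "card E \<le> card ((A - X) \<times> B \<union> A \<times> E `` X)"
    using assms \<open>finite (E `` X)\<close> by (intro card_mono) auto
  also have "\<dots> \<le> card ((A - X) \<times> B) + card (A \<times> E `` X)"
    by (rule card_Un_le)
  also have "\<dots> \<le> card (A - X) * max (card A) (card B) + max (card A) (card B) * card (E `` X)"
    by (simp add: card_cartesian_product add_mono)
  also have "\<dots> = (card (A - X) + card (E `` X)) * max (card A) (card B)"
    by (simp add: algebra_simps)
  also have "\<dots> \<le> card M * max (card A) (card B)"
  proof (rule mult_le_mono1)
    have "card (A - X) = card A - card X" "card X \<le> card A"
      using X(1) assms(1) by (auto simp: card_Diff_subset finite_subset card_mono)
    then show "card (A - X) + card (E `` X) \<le> card M"
      using M(3) by (simp add: deficiency_def)
  qed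
  finally show ?thesis using M(1,2) by blast
qed

section \<open>Numerical semigroups and their Apery sets\<close>

lemma card_sumset_le:
  fixes A :: "'a::comm_monoid_add set"
  assumes "finite A"
  shows "2 * card (A + A) \<le> card A * (card A + 1)"
  using assms
proof (induction A rule: finite_induct)
  case (insert a A)
  have "insert a A + insert a A = (A + A) \<union> (+) a ` insert a A"
    by (auto simp: insert_set_plus set_plus_insert)
  then have "card (insert a A + insert a A) \<le> card (A + A) + card ((+) a ` insert a A)"
    by (simp only: card_Un_le)
  also have "card ((+) a ` insert a A) \<le> card (insert a A)"
    using insert.hyps(1) by (intro card_image_le) simp
  finally show ?case using insert by simp
qed simp

lemma P1_iff:
  "a \<in> P1 S \<longleftrightarrow> a \<in> min_gens S \<and> a \<noteq> multiplicity_ns S \<and>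
     conductor S + multiplicity_ns S < 3 * a \<and> 2 * a < conductor S + multiplicity_ns S"
  unfolding P1_def by (simp add: field_simps flip: of_nat_add of_nat_mult) linarith

lemma P2_iff:
  "a \<in> P2 S \<longleftrightarrow> a \<in> min_gens S \<and> a \<noteq> multiplicity_ns S \<and>
     conductor S + multiplicity_ns S \<le> 2 * a \<and> 3 * a < 2 * (conductor S + multiplicity_ns S)"
proof -
  have "(real (conductor S) + real (multiplicity_ns S)) / 2 \<le> real a
      \<longleftrightarrow> conductor S + multiplicity_ns S \<le> 2 * a"
    by (simp add: field_simps flip: of_nat_add of_nat_mult) linarith
  moreover have "real a < 2 * (real (conductor S) + real (multiplicity_ns S)) / 3
      \<longleftrightarrow> real (3 * a) < real (2 * (conductor S + multiplicity_ns S))"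
    by (simp add: field_simps)
  ultimately show ?thesis
    unfolding P2_def of_nat_less_iff by auto
qed

context
  fixes S :: "nat set"
  assumes numerical: "numerical_semigroup S"
begin

lemma numerical_semigroup_add: "x \<in> S \<Longrightarrow> y \<in> S \<Longrightarrow> x + y \<in> S"
  using numerical by (simp add: numerical_semigroup_def)

lemma conductor_add_mem: "conductor S + n \<in> S"
proof -
  obtain k where "\<forall>x\<in>UNIV - S. x < k"
    using numerical finite_nat_set_iff_bounded by (auto simp: numerical_semigroup_def)
  then have "\<forall>n. k + n \<in> S" by force
  then have "\<forall>n. (LEAST c. \<forall>n. c + n \<in> S) + n \<in> S"
    by (rule LeastI[where P = "\<lambda>c. \<forall>n. c + n \<in> S"])
  then show ?thesis
    unfolding conductor_def by blast
qed

lemma multiplicity_mem: "multiplicity_ns S \<in> S" "multiplicity_ns S \<noteq> 0"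
proof -
  have "\<exists>x. x \<in> S \<and> x \<noteq> 0"
    using conductor_add_mem[of 1] by (intro exI) auto
  then have "multiplicity_ns S \<in> S \<and> multiplicity_ns S \<noteq> 0"
    unfolding multiplicity_ns_def by (rule LeastI_ex)
  then show "multiplicity_ns S \<in> S" "multiplicity_ns S \<noteq> 0" by auto
qed

lemma multiplicity_le: "x \<in> S \<Longrightarrow> x \<noteq> 0 \<Longrightarrow> multiplicity_ns S \<le> x"
  unfolding multiplicity_ns_def by (simp add: Least_le)

lemma multiplicity_mem_min_gens: "multiplicity_ns S \<in> min_gens S"
proof -
  have "multiplicity_ns S \<noteq> x + y" if "x \<in> S" "x \<noteq> 0" "y \<noteq> 0" for x y
    using multiplicity_le[OF that(1,2)] that(3) by linarith
  then show ?thesis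
    using multiplicity_mem unfolding min_gens_def by blast
qed

lemma min_gens_le: "a \<in> min_gens S \<Longrightarrow> a \<le> conductor S + multiplicity_ns S"
proof (rule ccontr)
  assume a: "a \<in> min_gens S" "\<not> a \<le> conductor S + multiplicity_ns S"
  then have "a - multiplicity_ns S = conductor S + (a - multiplicity_ns S - conductor S)"
    "a = multiplicity_ns S + (a - multiplicity_ns S)" "a - multiplicity_ns S \<noteq> 0"
    by auto
  moreover have "\<not> (\<exists>x\<in>S. \<exists>y\<in>S. x \<noteq> 0 \<and> y \<noteq> 0 \<and> a = x + y)"
    using a(1) by (simp add: min_gens_def)
  ultimately show False
    using multiplicity_mem conductor_add_mem[of "a - multiplicity_ns S - conductor S"] by metis
qed

lemma finite_min_gens: "finite (min_gens S)"
  using min_gens_le by (meson finite_nat_set_iff_bounded_le)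

lemma apery_less: "w \<in> apery S \<Longrightarrow> w < conductor S + multiplicity_ns S"
proof (rule ccontr)
  assume w: "w \<in> apery S" "\<not> w < conductor S + multiplicity_ns S"
  then have "w - multiplicity_ns S = conductor S + (w - multiplicity_ns S - conductor S)"
    by auto
  then show False
    using w conductor_add_mem[of "w - multiplicity_ns S - conductor S"] by (simp add: apery_def)
qed

lemma finite_apery: "finite (apery S)"
  using apery_less by (meson finite_nat_set_iff_bounded)

lemma apery_summand:
  assumes "x + y \<in> apery S" "x \<in> S" "y \<in> S"
  shows "x \<in> apery S"
proof -
  have "x + y - multiplicity_ns S = (x - multiplicity_ns S) + y" if "multiplicity_ns S \<le> x"
    using that by simp
  then show ?thesis
    using assms numerical_semigroup_add[of "x - multiplicity_ns S" y] unfolding apery_def by auto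
qed

lemma multiplicity_not_mem_apery: "multiplicity_ns S \<notin> apery S"
  using numerical by (simp add: apery_def numerical_semigroup_def)

lemma apery_not_min_gen_decompose:
  assumes "w \<in> apery S" "w \<noteq> 0" "w \<notin> min_gens S"
  obtains x y where "x \<in> apery S" "y \<in> apery S" "x \<noteq> 0" "y \<noteq> 0" "w = x + y"
proof -
  obtain x y where "x \<in> S" "y \<in> S" "x \<noteq> 0" "y \<noteq> 0" "w = x + y"
    using assms unfolding min_gens_def apery_def by blast
  then show thesis
    using that apery_summand[of x y] apery_summand[of y x] assms(1) by (simp add: add.commute)
qed

lemma apery_ge_min_gen:
  assumes "w \<in> apery S" "w \<noteq> 0"
  obtains g where "g \<in> min_gens S - {multiplicity_ns S}" "g \<le> w"
  using assms
proof (induction w arbitrary: thesis rule: less_induct)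
  case (less w)
  show ?case
  proof (cases "w \<in> min_gens S")
    case True
    then show ?thesis using less.prems multiplicity_not_mem_apery by blast
  next
    case False
    then obtain x y where "x \<in> apery S" "x \<noteq> 0" "y \<noteq> 0" "w = x + y"
      using apery_not_min_gen_decompose[OF less.prems(2,3)] by blast
    then show ?thesis
      using less.IH[of x] less.prems(1) by (metis le_add1 less_add_same_cancel1 not_gr_zero order.trans)
  qed
qed

lemma lessThan_multiplicity_subset_mod_apery:
  "{..<multiplicity_ns S} \<subseteq> (\<lambda>w. w mod multiplicity_ns S) ` apery S"
proof
  fix r assume r: "r \<in> {..<multiplicity_ns S}"
  define P where "P n \<longleftrightarrow> n \<in> S \<and> n mod multiplicity_ns S = r" for n
  \<comment> \<open>the least element of \<open>S\<close> in a residue class lies in the Apery set\<close>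
  define w where "w = (LEAST n. P n)"
  have "conductor S \<le> conductor S * multiplicity_ns S + r"
    using multiplicity_mem(2) by (simp add: trans_le_add1)
  then have "P (conductor S * multiplicity_ns S + r)"
    using r conductor_add_mem[of "conductor S * multiplicity_ns S + r - conductor S"]
    by (simp add: P_def)
  then have w: "P w" unfolding w_def by (rule LeastI)
  have "w \<in> apery S"
  proof -
    have "\<not> P (w - multiplicity_ns S)" if "multiplicity_ns S \<le> w"
      using Least_le[of P "w - multiplicity_ns S", folded w_def] multiplicity_mem(2) that by linarith
    then show ?thesis
      using w by (auto simp: apery_def P_def le_mod_geq)
  qed
  then show "r \<in> (\<lambda>w. w mod multiplicity_ns S) ` apery S"
    using w by (auto simp: P_def)
qed

lemma multiplicity_le_card_apery: "multiplicity_ns S \<le> card (apery S)"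
proof -
  have "multiplicity_ns S \<le> card ((\<lambda>w. w mod multiplicity_ns S) ` apery S)"
    using card_mono[OF _ lessThan_multiplicity_subset_mod_apery] finite_apery by simp
  also have "\<dots> \<le> card (apery S)"
    using finite_apery by (rule card_image_le)
  finally show ?thesis .
qed

lemma finite_P1: "finite (P1 S)" and finite_P2: "finite (P2 S)"
  using finite_min_gens by (simp_all add: P1_def P2_def)

lemma finite_apery_pairs: "finite (apery_pairs S)"
proof (rule finite_subset)
  show "apery_pairs S \<subseteq> P1 S \<times> P2 S" by (auto simp: apery_pairs_def)
qed (simp add: finite_P1 finite_P2)

lemma card_le_sigma_ap: "independent_pairs S M \<Longrightarrow> card M \<le> sigma_ap S"
  unfolding sigma_ap_def
proof (rule Max_ge)
  have "{card A |A. independent_pairs S A} \<subseteq> {..card (apery_pairs S)}"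
    using finite_apery_pairs by (auto simp: independent_pairs_def card_mono)
  then show "finite {card A |A. independent_pairs S A}"
    by (rule finite_subset) simp
qed auto

lemma card_apery_pairs_le:
  "card (apery_pairs S) \<le> sigma_ap S * max (card (P1 S)) (card (P2 S))"
proof -
  obtain M where M: "M \<subseteq> apery_pairs S" "matching M"
    "card (apery_pairs S) \<le> card M * max (card (P1 S)) (card (P2 S))"
    using card_le_matching_mult_max[OF finite_P1 finite_P2, of "apery_pairs S"]
    by (auto simp: apery_pairs_def)
  have "card M \<le> sigma_ap S"
    using card_le_sigma_ap M(1,2) by (simp add: independent_pairs_def matching_def)
  then show ?thesis
    using M(3) by (meson mult_le_mono1 order_trans)
qed

context
  assumes large: "\<And>g. g \<in> min_gens S - {multiplicity_ns S} \<Longrightarrow>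
    conductor S + multiplicity_ns S < 3 * g"
begin

lemma apery_summand_min_gen:
  assumes "x + y \<in> apery S" "x \<in> apery S" "y \<in> apery S" "x \<noteq> 0" "y \<noteq> 0"
  shows "x \<in> min_gens S - {multiplicity_ns S}"
proof (rule ccontr)
  assume x: "x \<notin> min_gens S - {multiplicity_ns S}"
  then obtain x1 x2 where "x1 \<in> apery S" "x2 \<in> apery S" "x1 \<noteq> 0" "x2 \<noteq> 0" "x = x1 + x2"
    using apery_not_min_gen_decompose[OF assms(2,4)] assms(2) multiplicity_not_mem_apery by blast
  \<comment> \<open>so \<open>x + y\<close> dominates three generators, each above a third of \<open>c + \<mu>\<close>\<close>
  then obtain g1 g2 g3 where g: "g1 \<in> min_gens S - {multiplicity_ns S}"
    "g2 \<in> min_gens S - {multiplicity_ns S}" "g3 \<in> min_gens S - {multiplicity_ns S}"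
    and "g1 + g2 + g3 \<le> x + y"
    by (metis apery_ge_min_gen assms(3,5) add_mono)
  moreover note large[OF g(1)] large[OF g(2)] large[OF g(3)] apery_less[OF assms(1)]
  ultimately show False by linarith
qed

lemma apery_sum_of_min_gens:
  assumes "w \<in> apery S" "w \<noteq> 0" "w \<notin> min_gens S"
  obtains x y where "x \<in> min_gens S - {multiplicity_ns S}" "y \<in> min_gens S - {multiplicity_ns S}"
    "x \<le> y" "w = x + y"
proof -
  obtain x y where xy: "x \<in> apery S" "y \<in> apery S" "x \<noteq> 0" "y \<noteq> 0" "w = x + y"
    using apery_not_min_gen_decompose[OF assms] .
  then have "x \<in> min_gens S - {multiplicity_ns S}" "y \<in> min_gens S - {multiplicity_ns S}"
    using apery_summand_min_gen[of x y] apery_summand_min_gen[of y x] assms(1)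
    by (simp_all add: add.commute)
  then show thesis
    using that xy(5) by (cases "x \<le> y") (auto simp: add.commute)
qed

lemma apery_subset_generators_and_sums:
  "apery S \<subseteq> insert 0 (min_gens S - {multiplicity_ns S}) \<union> (P1 S + P1 S)
     \<union> (\<lambda>(a, b). a + b) ` apery_pairs S"
proof
  fix w assume w: "w \<in> apery S"
  show "w \<in> insert 0 (min_gens S - {multiplicity_ns S}) \<union> (P1 S + P1 S)
     \<union> (\<lambda>(a, b). a + b) ` apery_pairs S"
  proof (cases "w = 0 \<or> w \<in> min_gens S")
    case True
    then show ?thesis using w multiplicity_not_mem_apery by auto
  next
    case False
    then obtain x y where x: "x \<in> min_gens S - {multiplicity_ns S}"
      and y: "y \<in> min_gens S - {multiplicity_ns S}" and "x \<le> y" "w = x + y"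
      using apery_sum_of_min_gens w by blast
    moreover have "w < conductor S + multiplicity_ns S"
      using apery_less[OF w] .
    ultimately have "x \<in> P1 S" "y \<in> P1 S \<or> y \<in> P2 S"
      using large[OF x] large[OF y] by (auto simp: P1_iff P2_iff)
    then show ?thesis
      using w \<open>w = x + y\<close> by (auto simp: apery_pairs_def image_iff)
  qed
qed

lemma card_apery_le:
  "card (apery S) \<le> embdim S + card (P1 S + P1 S) + card (apery_pairs S)"
proof -
  let ?G = "min_gens S - {multiplicity_ns S}"
  have "card (apery S) \<le> card (insert 0 ?G \<union> (P1 S + P1 S) \<union> (\<lambda>(a, b). a + b) ` apery_pairs S)"
    using apery_subset_generators_and_sums finite_apery finite_min_gens finite_apery_pairs
    by (intro card_mono) (auto simp: P1_def intro!: finite_set_plus)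
  also have "\<dots> \<le> card (insert 0 ?G) + card (P1 S + P1 S) + card ((\<lambda>(a, b). a + b) ` apery_pairs S)"
    by (meson card_Un_le add_right_mono order_trans)
  also have "card (insert 0 ?G) = embdim S"
  proof -
    have "0 \<notin> ?G" "0 < card (min_gens S)"
      using finite_min_gens multiplicity_mem_min_gens by (auto simp: min_gens_def card_gt_0_iff)
    then show ?thesis
      using finite_min_gens multiplicity_mem_min_gens by (simp add: embdim_def card_Diff_singleton)
  qed
  also have "card ((\<lambda>(a, b). a + b) ` apery_pairs S) \<le> card (apery_pairs S)"
    using finite_apery_pairs by (rule card_image_le)
  finally show ?thesis by simp
qed

end

end

lemma Min_min_gens_bound:
  assumes "numerical_semigroup S"
    and "(real (conductor S) + real (multiplicity_ns S)) / 3
           < real (Min (min_gens S - {multiplicity_ns S}))"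
    and "g \<in> min_gens S - {multiplicity_ns S}"
  shows "conductor S + multiplicity_ns S < 3 * g"
proof -
  have "Min (min_gens S - {multiplicity_ns S}) \<le> g"
    using assms(3) finite_min_gens[OF assms(1)] by (intro Min_le) auto
  then have "real (conductor S + multiplicity_ns S) < real (3 * g)"
    using assms(2) by simp
  then show ?thesis by (simp only: of_nat_less_iff)
qed

theorem corollary4p2:
  fixes S :: "nat set"
  assumes "numerical_semigroup S"
    and "embdim S \<ge> 2"
    and "(real (conductor S) + real (multiplicity_ns S)) / 3
           < real (Min (min_gens S - {multiplicity_ns S}))"
  shows "real (card (P1 S)) * (real (card (P1 S)) + 1) / 2
         + real (sigma_ap S) * real (max (card (P1 S)) (card (P2 S)))
         + real (embdim S) \<ge> real (multiplicity_ns S)"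
proof -
  have "multiplicity_ns S \<le> embdim S + card (P1 S + P1 S) + card (apery_pairs S)"
    using multiplicity_le_card_apery[OF assms(1)]
      card_apery_le[OF assms(1) Min_min_gens_bound[OF assms(1,3)]] by linarith
  then have "real (multiplicity_ns S)
      \<le> real (embdim S) + real (card (P1 S + P1 S)) + real (card (apery_pairs S))"
    by (metis of_nat_add of_nat_mono)
  moreover have "real (card (apery_pairs S))
      \<le> real (sigma_ap S) * real (max (card (P1 S)) (card (P2 S)))"
    using card_apery_pairs_le[OF assms(1)] by (metis of_nat_mono of_nat_mult)
  moreover have "real (2 * card (P1 S + P1 S)) \<le> real (card (P1 S) * (card (P1 S) + 1))"
    using card_sumset_le[OF finite_P1[OF assms(1)]] by (rule of_nat_mono)
  then have "real (card (P1 S + P1 S)) \<le> real (card (P1 S)) * (real (card (P1 S)) + 1) / 2"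
    by (simp add: algebra_simps)
  ultimately show ?thesis by linarith
qed

end
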